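(* Let $d\ge 1$ and $z\ge 2$ be integers. For $c=(c_{d+1},c_{d+2},\dots,c_{dz})\in\mathbb{Z}_2^{d(z-1)}$ with $s=\|c\|$, let $i_1<\dots<i_s$ be the indices with $c_{i}=1$, and set $w_0=0$, $w_t=\lfloor (i_t-1)/d\rfloor$ for $1\le t\le s$, and $w_{s+1}=z$. Let $V(z)=\{c\in\mathbb{Z}_2^{d(z-1)}: \max_{0\le t\le s}(w_{t+1}-w_t)\le\lceil (\log_2 z)^2\rceil\}$. Then $$|V(z)|\ge 2^{d(z-1)}\big(1-2z^{\,1-d\log_2 z}\big).$$
   Context: $\|c\|$ denotes the Hamming weight (number of coordinates equal to $1$). Note $1\le w_t\le z-1$ for $1\le t\le s$. *)

theory Defs
  imports Complex_Main
begin

text \<open>A vector c = (c_{d+1},...,c_{dz}) in Z_2^{d(z-1)} is represented as a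
  function nat \<Rightarrow> bool that is False outside the index range {d+1..d*z}.\<close>

definition binvecs :: "nat \<Rightarrow> nat \<Rightarrow> (nat \<Rightarrow> bool) set" where
  "binvecs d z = {c. \<forall>i. i \<notin> {d+1..d*z} \<longrightarrow> \<not> c i}"

definition wseq :: "nat \<Rightarrow> nat \<Rightarrow> (nat \<Rightarrow> bool) \<Rightarrow> nat list" where
  "wseq d z c = 0 # map (\<lambda>i. (i - 1) div d) (sorted_list_of_set {i \<in> {d+1..d*z}. c i}) @ [z]"

definition Vset :: "nat \<Rightarrow> nat \<Rightarrow> (nat \<Rightarrow> bool) set" where
  "Vset d z = {c \<in> binvecs d z.
     (let w = wseq d z c; s = card {i \<in> {d+1..d*z}. c i} in
       real_of_int (Max {int (w ! (t+1)) - int (w ! t) | t. t \<in> {0..s}})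
         \<le> real_of_int (ceiling ((log 2 (real z))^2)))}"

end

theory Submission
  imports Defs
begin

text \<open>If c \<notin> V(z), two consecutive w-values are more than
  L = \<lceil>(log_2 z)^2\<rceil> apart, so c vanishes on a whole block of L consecutive
  coordinate groups {a d + 1 .. (a + L) d} with 1 \<le> a \<le> z - L. For fixed a only
  2^(d(z-1) - L d) vectors do so, and there are at most z choices of a. Hence
  at most z 2^(d(z-1)) / 2^(L d) vectors are missing from V(z), and
  z / 2^(L d) \<le> z / z^(d log_2 z) = z^(1 - d log_2 z).\<close>

definition bool_funs_on :: "'a set \<Rightarrow> ('a \<Rightarrow> bool) set" where
  "bool_funs_on S = {c. \<forall>i. i \<notin> S \<longrightarrow> \<not> c i}"

definition gap_bound :: "nat \<Rightarrow> nat" where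
  "gap_bound z = nat \<lceil>(log 2 (real z))\<^sup>2\<rceil>"

lemma binvecs_eq_bool_funs_on: "binvecs d z = bool_funs_on {d+1..d*z}"
  by (simp add: binvecs_def bool_funs_on_def)

lemma card_bool_funs_on:
  assumes "finite S"
  shows "card (bool_funs_on S) = 2 ^ card S"
proof -
  have "bij_betw Collect (bool_funs_on S) (Pow S)"
  proof (rule bij_betwI')
    show "X \<in> Pow S \<Longrightarrow> \<exists>c\<in>bool_funs_on S. X = Collect c" for X
      by (intro bexI[of _ "\<lambda>i. i \<in> X"]) (auto simp: bool_funs_on_def)
  qed (auto simp: bool_funs_on_def)
  then show ?thesis
    using bij_betw_same_card card_Pow assms by metis
qed

lemma finite_bool_funs_on: "finite S \<Longrightarrow> finite (bool_funs_on S)"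
  by (rule card_ge_0_finite) (simp add: card_bool_funs_on)

lemma card_bool_funs_on_Diff:
  assumes "finite S" and "T \<subseteq> S"
  shows "card (bool_funs_on (S - T)) * 2 ^ card T = card (bool_funs_on S)"
  using assms by (simp add: card_bool_funs_on card_Diff_subset finite_subset
      power_add[symmetric] card_mono)

lemma card_binvecs: "card (binvecs d z) = 2 ^ (d * (z - 1))"
  by (simp add: binvecs_eq_bool_funs_on card_bool_funs_on right_diff_distrib')

lemma sorted_nth_gap:
  assumes "sorted ys" and "y \<in> set ys" and "Suc t < length ys"
  shows "y \<le> ys ! t \<or> ys ! Suc t \<le> y"
proof -
  obtain k where k: "k < length ys" "ys ! k = y"
    using assms(2) by (metis in_set_conv_nth)
  show ?thesis
    using sorted_nth_mono[OF assms(1), of k t] sorted_nth_mono[OF assms(1), of "Suc t" k]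
      k assms(3) by (cases "k \<le> t") auto
qed

lemma length_wseq: "length (wseq d z c) = card {i \<in> {d+1..d*z}. c i} + 2"
  by (simp add: wseq_def)

lemma wseq_last: "wseq d z c ! (card {i \<in> {d+1..d*z}. c i} + 1) = z"
  by (simp add: wseq_def nth_append)

lemma wseq_member:
  assumes "i \<in> {d+1..d*z}" and "c i"
  shows "(i - 1) div d \<in> set (wseq d z c)"
  using assms by (simp add: wseq_def)

lemma sorted_wseq:
  assumes "d \<ge> 1"
  shows "sorted (wseq d z c)"
proof -
  have le_z: "(i - 1) div d \<le> z" if "i \<le> d * z" for i
    using div_le_mono[of "i - 1" "d * z" d] that assms by simp
  have "sorted (map (\<lambda>i. (i - 1) div d) (sorted_list_of_set {i \<in> {d+1..d*z}. c i}))"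
    by (intro sorted_wrt_map_mono[of "(\<le>)"]) (auto intro: div_le_mono)
  then show ?thesis
    using le_z by (auto simp: wseq_def sorted_append)
qed

lemma gap_of_notin_Vset:
  assumes "c \<in> binvecs d z" and "c \<notin> Vset d z"
  obtains t where "t \<le> card {i \<in> {d+1..d*z}. c i}"
    and "wseq d z c ! t + gap_bound z < wseq d z c ! Suc t"
proof -
  let ?w = "wseq d z c" and ?s = "card {i \<in> {d+1..d*z}. c i}"
  let ?M = "{int (?w ! (t+1)) - int (?w ! t) | t. t \<in> {0..?s}}"
  have "0 \<le> (log 2 (real z))\<^sup>2"
    by simp
  then have "0 \<le> \<lceil>(log 2 (real z))\<^sup>2\<rceil>"
    by linarith
  then have ceil: "\<lceil>(log 2 (real z))\<^sup>2\<rceil> = int (gap_bound z)"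
    by (simp add: gap_bound_def)
  have "\<not> Max ?M \<le> int (gap_bound z)"
    using assms unfolding Vset_def by (simp add: Let_def ceil)
  moreover have "Max ?M \<in> ?M"
    by (rule Max_in) auto
  ultimately show ?thesis
    using that by fastforce
qed

text \<open>The window starts right after the w-value w_t: every nonzero coordinate
  in it would produce a w-value strictly between w_t and w_{t+1}.\<close>

lemma empty_window_of_notin_Vset:
  assumes d: "d \<ge> 1" and c: "c \<in> binvecs d z" "c \<notin> Vset d z"
  obtains a where "1 \<le> a" and "a + gap_bound z \<le> z"
    and "c \<in> bool_funs_on ({d+1..d*z} - {a*d+1..(a + gap_bound z)*d})"
proof -
  let ?w = "wseq d z c" and ?s = "card {i \<in> {d+1..d*z}. c i}" and ?L = "gap_bound z"
  obtain t where t: "t \<le> ?s" and gap: "?w ! t + ?L < ?w ! Suc t"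
    using gap_of_notin_Vset[OF c] .
  have sorted: "sorted ?w" and len: "length ?w = ?s + 2"
    using sorted_wseq[OF d] length_wseq by auto
  have "?w ! Suc t \<le> ?w ! (?s + 1)"
    using sorted_nth_mono[OF sorted] t len by simp
  then have window_le_z: "?w ! t + 1 + ?L \<le> z"
    using gap wseq_last by simp
  have "\<not> c i" if i: "(?w ! t + 1) * d < i" "i \<le> (?w ! t + 1 + ?L) * d" for i
  proof
    assume "c i"
    have "i \<le> d * z"
      using i(2) window_le_z by (metis le_trans mult.commute mult_le_mono1)
    moreover have "d + 1 \<le> i"
      using i(1) by (simp add: add_mult_distrib)
    ultimately have member: "(i - 1) div d \<in> set ?w"
      using wseq_member \<open>c i\<close> by simp
    have "(?w ! t + 1) * d \<le> i - 1"
      using i(1) by linarith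
    then have lower: "?w ! t < (i - 1) div d"
      using div_le_mono[of "(?w ! t + 1) * d" "i - 1" d] d by simp
    have "i - 1 < (?w ! t + 1 + ?L) * d"
      using i by linarith
    then have upper: "(i - 1) div d < ?w ! Suc t"
      using less_mult_imp_div_less[of "i - 1" "?w ! t + 1 + ?L" d] gap by simp
    show False
      using sorted_nth_gap[OF sorted member, of t] t len lower upper by auto
  qed
  then have "c \<in> bool_funs_on ({d+1..d*z} - {(?w ! t + 1)*d+1..(?w ! t + 1 + ?L)*d})"
    using c(1) by (auto simp: binvecs_eq_bool_funs_on bool_funs_on_def)
  then show ?thesis
    using window_le_z by (intro that[of "?w ! t + 1"]) simp_all
qed

lemma card_notin_Vset_le:
  assumes d: "d \<ge> 1"
  shows "card (binvecs d z - Vset d z) * 2 ^ (gap_bound z * d) \<le> z * 2 ^ (d * (z - 1))"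
proof -
  let ?L = "gap_bound z" and ?S = "{d+1..d*z}"
  define A where "A = {a. 1 \<le> a \<and> a + ?L \<le> z}"
  define W where "W a = bool_funs_on (?S - {a*d+1..(a + ?L)*d})" for a
  have card_W: "card (W a) * 2 ^ (?L * d) = 2 ^ (d * (z - 1))" if "a \<in> A" for a
  proof -
    have window: "{a*d+1..(a + ?L)*d} \<subseteq> ?S"
      using that mult_le_mono1[of 1 a d] mult_le_mono1[of "a + ?L" z d]
      by (auto simp: A_def mult.commute)
    have "card {a*d+1..(a + ?L)*d} = ?L * d"
      by (simp add: add_mult_distrib)
    then show ?thesis
      using card_bool_funs_on_Diff[OF _ window] card_binvecs[of d z]
      unfolding W_def binvecs_eq_bool_funs_on by simp
  qed
  have finite_A: "finite A"
    by (rule finite_subset[of _ "{..z}"]) (auto simp: A_def)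
  have "binvecs d z - Vset d z \<subseteq> (\<Union>a\<in>A. W a)"
    using empty_window_of_notin_Vset[OF d] by (simp add: A_def W_def subset_iff) blast
  then have "card (binvecs d z - Vset d z) \<le> card (\<Union>a\<in>A. W a)"
    by (rule card_mono[rotated]) (simp add: finite_A W_def finite_bool_funs_on)
  also have "\<dots> \<le> (\<Sum>a\<in>A. card (W a))"
    by (rule card_UN_le[OF finite_A])
  finally have "card (binvecs d z - Vset d z) \<le> (\<Sum>a\<in>A. card (W a))" .
  then have "card (binvecs d z - Vset d z) * 2 ^ (?L * d) \<le> (\<Sum>a\<in>A. card (W a) * 2 ^ (?L * d))"
    by (simp add: sum_distrib_right[symmetric])
  also have "\<dots> = card A * 2 ^ (d * (z - 1))"
    using card_W by simp
  also have "\<dots> \<le> z * 2 ^ (d * (z - 1))"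
  proof -
    have "card A \<le> card {1..z}"
      by (rule card_mono) (auto simp: A_def)
    then show ?thesis
      by simp
  qed
  finally show ?thesis .
qed

lemma div_two_pow_gap_bound_le:
  assumes "z > 0"
  shows "real z / 2 ^ (gap_bound z * d) \<le> real z powr (1 - real d * log 2 (real z))"
proof -
  have "real z powr (real d * log 2 (real z)) = (2 powr log 2 (real z)) powr (real d * log 2 (real z))"
    using assms by simp
  also have "\<dots> = 2 powr (real d * (log 2 (real z))\<^sup>2)"
    by (simp add: powr_powr power2_eq_square mult_ac)
  also have "\<dots> \<le> 2 powr real (gap_bound z * d)"
    using real_nat_ceiling_ge[of "(log 2 (real z))\<^sup>2"]
    by (intro powr_mono) (auto simp: gap_bound_def mult.commute intro: mult_left_mono)
  also have "\<dots> = 2 ^ (gap_bound z * d)"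
    by (rule powr_realpow) simp
  finally have "real z powr (real d * log 2 (real z)) \<le> 2 ^ (gap_bound z * d)" .
  then have "real z / 2 ^ (gap_bound z * d) \<le> real z / real z powr (real d * log 2 (real z))"
    using assms by (intro divide_left_mono) auto
  also have "\<dots> = real z powr (1 - real d * log 2 (real z))"
    using assms by (simp add: powr_diff)
  finally show ?thesis .
qed

theorem mainTheorem11:
  fixes d z :: nat
  assumes "d \<ge> 1" and "z \<ge> 2"
  shows "real (card (Vset d z)) \<ge>
    2 ^ (d * (z - 1)) * (1 - 2 * real z powr (1 - real d * log 2 (real z)))"
proof -
  let ?n = "d * (z - 1)" and ?P = "real z powr (1 - real d * log 2 (real z))"
  let ?bad = "binvecs d z - Vset d z" and ?D = "2 ^ (gap_bound z * d) :: real"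
  have sub: "Vset d z \<subseteq> binvecs d z"
    by (auto simp: Vset_def)
  have "finite (binvecs d z)"
    by (simp add: binvecs_eq_bool_funs_on finite_bool_funs_on)
  then have "card (Vset d z) + card ?bad = 2 ^ ?n"
    using card_binvecs[of d z] card_Diff_subset[OF finite_subset[OF sub] sub] card_mono[OF _ sub]
    by simp
  then have total: "real (card (Vset d z)) + real (card ?bad) = 2 ^ ?n"
    by (metis of_nat_add of_nat_numeral of_nat_power)
  have "real (card ?bad * 2 ^ (gap_bound z * d)) \<le> real (z * 2 ^ ?n)"
    using card_notin_Vset_le[OF assms(1), of z] by (simp only: of_nat_le_iff)
  then have "real (card ?bad) \<le> real z / ?D * 2 ^ ?n"
    by (simp add: pos_le_divide_eq)
  also have "\<dots> \<le> ?P * 2 ^ ?n"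
    using div_two_pow_gap_bound_le[of z d] assms(2) by (intro mult_right_mono) auto
  finally have "real (card ?bad) \<le> ?P * 2 ^ ?n" .
  moreover have "2 ^ ?n * (1 - 2 * ?P) = 2 ^ ?n - 2 * (?P * 2 ^ ?n)" and "?P * 2 ^ ?n \<ge> 0"
    by (simp_all add: algebra_simps)
  ultimately show ?thesis
    using total by linarith
qed

end
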